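(* Let $k\ge 2$ be a fixed integer. For $n\ge 1$, let $Y_n$ be the random variable counting the indices $i$ with $1\le i\le n-k+1$ such that $p_i<p_{i+1}<\cdots<p_{i+k-1}$, where $p=p_1\cdots p_n$ is a permutation chosen uniformly at random among all permutations of length $n$. Then \[\frac{Y_n-E(Y_n)}{\sqrt{\operatorname{Var}(Y_n)}}\] converges in distribution to the standard normal distribution $N(0,1)$ as $n\to\infty$.
   Context: Each permutation of length $n$ is selected with probability $1/n!$. $Y_n$ is the number of "tight" (consecutive-position) copies of the monotone pattern $12\cdots k$. *)

theory Defs
  imports "HOL-Probability.Probability" "HOL-Combinatorics.Permutations"
begin

definition unif_perm :: "nat \<Rightarrow> (nat \<Rightarrow> nat) pmf" where
  "unif_perm n = pmf_of_set {p. p permutes {1..n}}"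

definition tight_incr_count :: "nat \<Rightarrow> nat \<Rightarrow> (nat \<Rightarrow> nat) \<Rightarrow> nat" where
  "tight_incr_count k n p =
     card {i. 1 \<le> i \<and> i + k - 1 \<le> n \<and> (\<forall>j. i \<le> j \<and> j < i + k - 1 \<longrightarrow> p j < p (Suc j))}"

definition Y :: "nat \<Rightarrow> nat \<Rightarrow> (nat \<Rightarrow> nat) \<Rightarrow> real" where
  "Y k n p = real (tight_incr_count k n p)"

end

theory Submission
  imports Defs
begin

text \<open>
  A uniform random permutation of length \<open>n\<close> is realised as the rank vector of i.i.d. uniform
  reals \<open>\<omega>\<^sub>1, \<dots>, \<omega>\<^sub>n\<close>: ties have probability zero and, by exchangeability, every rank
  permutation has probability \<open>1 / n!\<close>. Ranks preserve the relative order of the entries, so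
  \<open>Y\<^sub>n\<close> becomes \<open>\<Sum>\<^sub>i I\<^sub>i\<close> where \<open>I\<^sub>i\<close> indicates \<open>\<omega>\<^sub>i < \<dots> < \<omega>\<^bsub>i+k-1\<^esub>\<close>.
  These indicators form a stationary \<open>k\<close>-dependent sequence with mean \<open>1 / k!\<close>, whose
  covariances depend only on the distance and vanish from distance \<open>k\<close> on; hence
  \<open>Var Y\<^sub>n = \<sigma>\<^sup>2 n + O(1)\<close> with \<open>\<sigma>\<^sup>2 > 0\<close>.

  Asymptotic normality follows by Bernstein's blocking method: the starting indices are cut into big
  blocks of length \<open>p\<close> separated by gaps of length \<open>k - 1\<close>. The big-block sums are i.i.d., so the
  classical central limit theorem applies to them, while the leftover indices contribute a variance
  that is \<open>O(1 / p)\<close> relative to \<open>Var Y\<^sub>n\<close>. Letting first \<open>n\<close> and then \<open>p\<close> tend to infinity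
  gives the limit.
\<close>

section \<open>Approximating distribution functions\<close>

lemma tendsto_mono_fun_compose:
  fixes F :: "nat \<Rightarrow> real \<Rightarrow> real" and G :: "real \<Rightarrow> real" and N :: "nat \<Rightarrow> nat"
  assumes F: "\<And>y. (\<lambda>m. F m y) \<longlonglongrightarrow> G y"
    and mono: "\<And>m a b. a \<le> b \<Longrightarrow> F m a \<le> F m b"
    and G: "isCont G z"
    and N: "filterlim N at_top sequentially"
    and z: "zs \<longlonglongrightarrow> z"
  shows "(\<lambda>n. F (N n) (zs n)) \<longlonglongrightarrow> G z"
proof (rule tendstoI)
  fix e :: real assume "0 < e"
  then obtain d where "0 < d" and d: "\<And>y. dist y z < d \<Longrightarrow> dist (G y) (G z) < e / 2"
    using G unfolding continuous_at_eps_delta by (metis half_gt_zero)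
  have G_near: "dist (G (z - d / 2)) (G z) < e / 2" "dist (G (z + d / 2)) (G z) < e / 2"
    using \<open>0 < d\<close> by (intro d; simp add: dist_real_def)+
  have "\<forall>\<^sub>F n in sequentially. dist (zs n) z < d / 2"
    by (rule tendstoD[OF z]) (use \<open>0 < d\<close> in simp)
  moreover have "\<forall>\<^sub>F n in sequentially. dist (F (N n) (z - d / 2)) (G (z - d / 2)) < e / 2"
    by (rule tendstoD[OF filterlim_compose[OF F N]]) (use \<open>0 < e\<close> in simp)
  moreover have "\<forall>\<^sub>F n in sequentially. dist (F (N n) (z + d / 2)) (G (z + d / 2)) < e / 2"
    by (rule tendstoD[OF filterlim_compose[OF F N]]) (use \<open>0 < e\<close> in simp)
  ultimately show "\<forall>\<^sub>F n in sequentially. dist (F (N n) (zs n)) (G z) < e"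
  proof eventually_elim
    case (elim n)
    then have "z - d / 2 \<le> zs n" "zs n \<le> z + d / 2"
      unfolding dist_real_def abs_less_iff by linarith+
    then have "F (N n) (z - d / 2) \<le> F (N n) (zs n)" "F (N n) (zs n) \<le> F (N n) (z + d / 2)"
      by (auto intro: mono)
    with elim G_near show ?case
      unfolding dist_real_def abs_less_iff by linarith
  qed
qed

lemma (in prob_space) prob_add_le_bounds:
  fixes f g :: "'a \<Rightarrow> real"
  assumes [measurable]: "f \<in> borel_measurable M" "g \<in> borel_measurable M"
    and "integrable M (\<lambda>\<omega>. (g \<omega>)\<^sup>2)" "0 < \<delta>"
  shows "prob {\<omega>\<in>space M. f \<omega> + g \<omega> \<le> x} \<le> prob {\<omega>\<in>space M. f \<omega> \<le> x + \<delta>} + expectation (\<lambda>\<omega>. (g \<omega>)\<^sup>2) / \<delta>\<^sup>2"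
    and "prob {\<omega>\<in>space M. f \<omega> \<le> x - \<delta>} \<le> prob {\<omega>\<in>space M. f \<omega> + g \<omega> \<le> x} + expectation (\<lambda>\<omega>. (g \<omega>)\<^sup>2) / \<delta>\<^sup>2"
proof -
  let ?B = "{\<omega>\<in>space M. \<delta> \<le> \<bar>g \<omega>\<bar>}"
  have cheb: "prob ?B \<le> expectation (\<lambda>\<omega>. (g \<omega>)\<^sup>2) / \<delta>\<^sup>2"
    using second_moment_method[OF _ assms(3,4)] by simp
  have "prob {\<omega>\<in>space M. f \<omega> + g \<omega> \<le> x} \<le> prob ({\<omega>\<in>space M. f \<omega> \<le> x + \<delta>} \<union> ?B)"
    by (intro finite_measure_mono) auto
  also have "\<dots> \<le> prob {\<omega>\<in>space M. f \<omega> \<le> x + \<delta>} + prob ?B"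
    by (rule measure_Un_le) measurable
  finally show "prob {\<omega>\<in>space M. f \<omega> + g \<omega> \<le> x} \<le> prob {\<omega>\<in>space M. f \<omega> \<le> x + \<delta>} + expectation (\<lambda>\<omega>. (g \<omega>)\<^sup>2) / \<delta>\<^sup>2"
    using cheb by linarith
  have "prob {\<omega>\<in>space M. f \<omega> \<le> x - \<delta>} \<le> prob ({\<omega>\<in>space M. f \<omega> + g \<omega> \<le> x} \<union> ?B)"
    by (intro finite_measure_mono) auto
  also have "\<dots> \<le> prob {\<omega>\<in>space M. f \<omega> + g \<omega> \<le> x} + prob ?B"
    by (rule measure_Un_le) measurable
  finally show "prob {\<omega>\<in>space M. f \<omega> \<le> x - \<delta>} \<le> prob {\<omega>\<in>space M. f \<omega> + g \<omega> \<le> x} + expectation (\<lambda>\<omega>. (g \<omega>)\<^sup>2) / \<delta>\<^sup>2"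
    using cheb by linarith
qed

lemma (in prob_space) tendsto_prob_le_of_approx:
  fixes X :: "nat \<Rightarrow> 'a \<Rightarrow> real" and A B :: "nat \<Rightarrow> nat \<Rightarrow> 'a \<Rightarrow> real"
    and H :: "nat \<Rightarrow> real \<Rightarrow> real" and G :: "real \<Rightarrow> real" and e :: "nat \<Rightarrow> real"
  assumes decomp: "\<And>p n \<omega>. X n \<omega> = A p n \<omega> + B p n \<omega>"
    and [measurable]: "\<And>p n. A p n \<in> borel_measurable M" "\<And>p n. B p n \<in> borel_measurable M"
    and B_sq: "\<And>p n. integrable M (\<lambda>\<omega>. (B p n \<omega>)\<^sup>2)"
    and A: "\<forall>\<^sub>F p in sequentially. \<forall>y. (\<lambda>n. prob {\<omega>\<in>space M. A p n \<omega> \<le> y}) \<longlonglongrightarrow> H p y"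
    and H: "\<And>y. (\<lambda>p. H p y) \<longlonglongrightarrow> G y"
    and G: "isCont G x"
    and B: "\<forall>\<^sub>F p in sequentially. \<forall>\<^sub>F n in sequentially. expectation (\<lambda>\<omega>. (B p n \<omega>)\<^sup>2) \<le> e p"
    and e: "e \<longlonglongrightarrow> 0"
  shows "(\<lambda>n. prob {\<omega>\<in>space M. X n \<omega> \<le> x}) \<longlonglongrightarrow> G x"
proof (rule tendstoI)
  fix \<epsilon> :: real assume "0 < \<epsilon>"
  then obtain d where "0 < d" and d: "\<And>y. dist y x < d \<Longrightarrow> dist (G y) (G x) < \<epsilon> / 4"
    using G unfolding continuous_at_eps_delta by (metis zero_less_divide_iff zero_less_numeral)
  define \<delta> where "\<delta> = d / 2"
  have "0 < \<delta>" using \<open>0 < d\<close> by (simp add: \<delta>_def)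
  have G_near: "dist (G (x + \<delta>)) (G x) < \<epsilon> / 4" "dist (G (x - \<delta>)) (G x) < \<epsilon> / 4"
    using \<open>0 < d\<close> by (intro d; simp add: \<delta>_def dist_real_def)+
  have "\<forall>\<^sub>F p in sequentially. (\<forall>y. (\<lambda>n. prob {\<omega>\<in>space M. A p n \<omega> \<le> y}) \<longlonglongrightarrow> H p y) \<and>
      (\<forall>\<^sub>F n in sequentially. expectation (\<lambda>\<omega>. (B p n \<omega>)\<^sup>2) \<le> e p) \<and>
      dist (H p (x + \<delta>)) (G (x + \<delta>)) < \<epsilon> / 4 \<and> dist (H p (x - \<delta>)) (G (x - \<delta>)) < \<epsilon> / 4 \<and>
      e p < \<epsilon> / 4 * \<delta>\<^sup>2"
    using \<open>0 < \<epsilon>\<close> \<open>0 < \<delta>\<close>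
    by (intro eventually_conj A B tendstoD[OF H] order_tendstoD(2)[OF e]) simp_all
  then obtain p where A_p: "\<And>y. (\<lambda>n. prob {\<omega>\<in>space M. A p n \<omega> \<le> y}) \<longlonglongrightarrow> H p y"
    and B_p: "\<forall>\<^sub>F n in sequentially. expectation (\<lambda>\<omega>. (B p n \<omega>)\<^sup>2) \<le> e p"
    and H_near: "dist (H p (x + \<delta>)) (G (x + \<delta>)) < \<epsilon> / 4" "dist (H p (x - \<delta>)) (G (x - \<delta>)) < \<epsilon> / 4"
    and e_p: "e p < \<epsilon> / 4 * \<delta>\<^sup>2"
    using eventually_happens'[OF sequentially_bot] by blast
  have "\<forall>\<^sub>F n in sequentially. dist (prob {\<omega>\<in>space M. A p n \<omega> \<le> x + \<delta>}) (H p (x + \<delta>)) < \<epsilon> / 4"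
    "\<forall>\<^sub>F n in sequentially. dist (prob {\<omega>\<in>space M. A p n \<omega> \<le> x - \<delta>}) (H p (x - \<delta>)) < \<epsilon> / 4"
    using \<open>0 < \<epsilon>\<close> by (intro tendstoD[OF A_p]; simp)+
  with B_p show "\<forall>\<^sub>F n in sequentially. dist (prob {\<omega>\<in>space M. X n \<omega> \<le> x}) (G x) < \<epsilon>"
  proof eventually_elim
    case (elim n)
    have small: "expectation (\<lambda>\<omega>. (B p n \<omega>)\<^sup>2) / \<delta>\<^sup>2 < \<epsilon> / 4"
      using elim(1) e_p \<open>0 < \<delta>\<close> by (simp add: field_simps)
    have X_eq: "{\<omega>\<in>space M. X n \<omega> \<le> x} = {\<omega>\<in>space M. A p n \<omega> + B p n \<omega> \<le> x}"
      by (rule Collect_cong) (metis decomp)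
    show ?case
      unfolding X_eq
      using small prob_add_le_bounds[OF assms(2)[of p n] assms(3)[of p n] B_sq[of p n] \<open>0 < \<delta>\<close>, of x]
        elim(2,3) G_near H_near
      unfolding dist_real_def abs_less_iff by linarith
  qed
qed

lemma isCont_std_normal_cdf: "isCont (cdf std_normal_distribution) x"
proof -
  interpret real_distribution std_normal_distribution
    by (rule real_dist_normal_dist)
  have "emeasure std_normal_distribution {x} = 0"
    by (subst emeasure_density) (auto intro: nn_integral_null_set)
  then show ?thesis
    by (simp add: isCont_cdf measure_def)
qed

section \<open>Uniform permutations as ranks of i.i.d. uniform variables\<close>

definition unif01 :: "real measure" where
  "unif01 = uniform_measure lborel {0..1}"

definition iid_unif :: "(nat \<Rightarrow> real) measure" where
  "iid_unif = PiM UNIV (\<lambda>_. unif01)"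

lemma prob_space_unif01: "prob_space unif01"
  unfolding unif01_def by (rule prob_space_uniform_measure) auto

lemma sets_unif01[simp, measurable_cong]: "sets unif01 = sets borel"
  unfolding unif01_def by simp

lemma space_unif01[simp]: "space unif01 = UNIV"
  unfolding unif01_def by simp

lemma emeasure_unif01_singleton: "emeasure unif01 {x} = 0"
  unfolding unif01_def by (cases "x \<in> {0..1}") auto

lemma prob_space_iid_unif: "prob_space iid_unif"
  unfolding iid_unif_def by (intro prob_space_PiM prob_space_unif01)

interpretation iid: prob_space iid_unif
  by (rule prob_space_iid_unif)

lemma space_iid_unif[simp]: "space iid_unif = UNIV"
  unfolding iid_unif_def by (simp add: space_PiM)

lemma measurable_component_unif01: "i \<in> I \<Longrightarrow> (\<lambda>\<omega>. \<omega> i) \<in> PiM I (\<lambda>_. unif01) \<rightarrow>\<^sub>M borel"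
  by (metis measurable_cong_sets measurable_component_singleton sets_unif01)

lemma measurable_iid_unif_component[measurable]: "(\<lambda>\<omega>. \<omega> i) \<in> iid_unif \<rightarrow>\<^sub>M borel"
  unfolding iid_unif_def by (rule measurable_component_unif01) simp

lemma measurable_iid_unif_reindex: "(\<lambda>\<omega> i. \<omega> (f i)) \<in> iid_unif \<rightarrow>\<^sub>M iid_unif"
  unfolding iid_unif_def
  by (rule measurable_PiM_single') (auto simp: measurable_iid_unif_component[unfolded iid_unif_def])

lemma distr_iid_unif_reindex:
  assumes "inj f"
  shows "distr iid_unif iid_unif (\<lambda>\<omega> i. \<omega> (f i)) = iid_unif"
  using distr_PiM_reindex[of UNIV "\<lambda>_. unif01" f UNIV] assms prob_space_unif01
  unfolding iid_unif_def by (simp add: restrict_UNIV)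

lemma distr_iid_unif_shift:
  assumes "f \<in> borel_measurable iid_unif"
  shows "distr iid_unif borel (\<lambda>\<omega>. f (\<lambda>i. \<omega> (i + d))) = distr iid_unif borel f"
proof -
  have "distr iid_unif borel f = distr (distr iid_unif iid_unif (\<lambda>\<omega> i. \<omega> (i + d))) borel f"
    by (simp add: distr_iid_unif_reindex inj_on_def)
  also have "\<dots> = distr iid_unif borel (f \<circ> (\<lambda>\<omega> i. \<omega> (i + d)))"
    by (rule distr_distr[OF assms measurable_iid_unif_reindex])
  finally show ?thesis by (simp add: comp_def)
qed

lemma integral_iid_unif_shift:
  fixes f :: "(nat \<Rightarrow> real) \<Rightarrow> real"
  assumes "f \<in> borel_measurable iid_unif"
  shows "(\<integral>\<omega>. f (\<lambda>i. \<omega> (i + d)) \<partial>iid_unif) = (\<integral>\<omega>. f \<omega> \<partial>iid_unif)"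
proof -
  have "(\<integral>\<omega>. f \<omega> \<partial>iid_unif) = (\<integral>\<omega>. f \<omega> \<partial>distr iid_unif iid_unif (\<lambda>\<omega> i. \<omega> (i + d)))"
    by (simp add: distr_iid_unif_reindex inj_on_def)
  also have "\<dots> = (\<integral>\<omega>. f (\<lambda>i. \<omega> (i + d)) \<partial>iid_unif)"
    by (rule integral_distr[OF measurable_iid_unif_reindex assms])
  finally show ?thesis by simp
qed

lemma indep_vars_iid_unif_components: "iid.indep_vars (\<lambda>_. unif01) (\<lambda>i \<omega>. \<omega> i) UNIV"
proof (subst iid.indep_vars_iff_distr_eq_PiM)
  have "distr iid_unif unif01 (\<lambda>\<omega>. \<omega> i) = unif01" for i
    unfolding iid_unif_def using distr_PiM_component[of UNIV "\<lambda>_. unif01"] prob_space_unif01 by simp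
  then show "distr iid_unif (PiM UNIV (\<lambda>_. unif01)) (\<lambda>x. \<lambda>i\<in>UNIV. x i)
      = PiM UNIV (\<lambda>i. distr iid_unif unif01 (\<lambda>\<omega>. \<omega> i))"
    unfolding restrict_UNIV by (simp add: iid_unif_def distr_id2)
qed (auto simp: iid_unif_def intro: measurable_component_singleton)

lemma indep_vars_iid_unif_blocks:
  fixes F :: "'b \<Rightarrow> (nat \<Rightarrow> real) \<Rightarrow> real"
  assumes "disjoint_family_on K I"
    and "\<And>b. b \<in> I \<Longrightarrow> g b \<in> PiM (K b) (\<lambda>_. unif01) \<rightarrow>\<^sub>M borel"
    and "\<And>b \<omega>. b \<in> I \<Longrightarrow> F b \<omega> = g b (restrict \<omega> (K b))"
  shows "iid.indep_vars (\<lambda>_. borel) F I"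
proof -
  have "iid.indep_vars (\<lambda>b. PiM (K b) (\<lambda>_. unif01)) (\<lambda>b \<omega>. restrict (\<lambda>i. \<omega> i) (K b)) I"
    by (rule iid.indep_vars_restrict[OF indep_vars_iid_unif_components]) (use assms(1) in simp_all)
  then have "iid.indep_vars (\<lambda>_. borel) (\<lambda>b \<omega>. g b (restrict \<omega> (K b))) I"
    by (rule iid.indep_vars_compose2) (rule assms(2))
  then show ?thesis
    by (rule iid.indep_vars_cong[THEN iffD1, rotated -1]) (auto simp: assms(3))
qed

lemma emeasure_unif01_graph_null:
  assumes "prob_space M" and [measurable]: "g \<in> borel_measurable M"
  shows "emeasure (unif01 \<Otimes>\<^sub>M M) {p \<in> space (unif01 \<Otimes>\<^sub>M M). fst p = g (snd p)} = 0"
proof -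
  interpret U: prob_space unif01 by (rule prob_space_unif01)
  interpret M: prob_space M by fact
  interpret UM: pair_prob_space unif01 M ..
  let ?G = "{p \<in> space (unif01 \<Otimes>\<^sub>M M). fst p = g (snd p)}"
  have "emeasure (unif01 \<Otimes>\<^sub>M M) ?G = (\<integral>\<^sup>+y. emeasure unif01 ((\<lambda>x. (x, y)) -` ?G) \<partial>M)"
    by (rule UM.emeasure_pair_measure_alt2) measurable
  also have "\<dots> = (\<integral>\<^sup>+y. 0 \<partial>M)"
  proof (rule nn_integral_cong)
    fix y assume "y \<in> space M"
    then have "(\<lambda>x. (x, y)) -` ?G = {g y}"
      by (auto simp: space_pair_measure)
    then show "emeasure unif01 ((\<lambda>x. (x, y)) -` ?G) = 0"
      by (simp add: emeasure_unif01_singleton)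
  qed
  finally show ?thesis by simp
qed

lemma iid_unif_tie_null:
  assumes "i \<noteq> j"
  shows "emeasure iid_unif {\<omega>. \<omega> i = \<omega> j} = 0"
proof -
  define Q where "Q = PiM (UNIV - {i}) (\<lambda>_. unif01)"
  define ins where "ins = (\<lambda>(x, X). X(i := x) :: nat \<Rightarrow> real)"
  have "prob_space Q"
    unfolding Q_def by (intro prob_space_PiM prob_space_unif01)
  have ins_meas: "ins \<in> unif01 \<Otimes>\<^sub>M Q \<rightarrow>\<^sub>M iid_unif"
  proof -
    have "ins = (\<lambda>p. (snd p)(i := fst p))" by (auto simp: ins_def)
    then show ?thesis
      unfolding iid_unif_def by (simp only:) (rule measurable_fun_upd[where J="UNIV - {i}"], auto simp: Q_def)
  qed
  have tie: "{\<omega>. \<omega> i = \<omega> j} \<in> sets iid_unif"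
  proof -
    have "{\<omega> \<in> space iid_unif. \<omega> i = \<omega> j} \<in> sets iid_unif" by measurable
    then show ?thesis by simp
  qed
  have "distr (unif01 \<Otimes>\<^sub>M Q) iid_unif ins = iid_unif"
    using distr_pair_PiM_eq_PiM[of "UNIV - {i}" "\<lambda>_. unif01" i] prob_space_unif01
    unfolding iid_unif_def Q_def ins_def by (simp add: insert_absorb)
  then have "emeasure iid_unif {\<omega>. \<omega> i = \<omega> j}
      = emeasure (unif01 \<Otimes>\<^sub>M Q) (ins -` {\<omega>. \<omega> i = \<omega> j} \<inter> space (unif01 \<Otimes>\<^sub>M Q))"
    using emeasure_distr[OF ins_meas tie] by simp
  also have "ins -` {\<omega>. \<omega> i = \<omega> j} \<inter> space (unif01 \<Otimes>\<^sub>M Q) = {p \<in> space (unif01 \<Otimes>\<^sub>M Q). fst p = snd p j}"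
    using assms by (auto simp: ins_def)
  also have "emeasure (unif01 \<Otimes>\<^sub>M Q) \<dots> = 0"
  proof -
    have "(\<lambda>X. X j) \<in> borel_measurable Q"
      unfolding Q_def using assms by (intro measurable_component_unif01) simp
    from emeasure_unif01_graph_null[OF \<open>prob_space Q\<close> this] show ?thesis by simp
  qed
  finally show ?thesis .
qed

lemma AE_iid_unif_inj_on:
  assumes "finite A"
  shows "AE \<omega> in iid_unif. inj_on \<omega> A"
proof -
  have "AE \<omega> in iid_unif. \<forall>(i, j)\<in>A \<times> A. i \<noteq> j \<longrightarrow> \<omega> i \<noteq> \<omega> j"
  proof (rule AE_finite_allI)
    fix ij :: "nat \<times> nat"
    show "AE \<omega> in iid_unif. (\<lambda>(i, j). i \<noteq> j \<longrightarrow> \<omega> i \<noteq> \<omega> j) ij"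
    proof (cases ij)
      case (Pair i j)
      have "{\<omega> \<in> space iid_unif. \<omega> i = \<omega> j} \<in> sets iid_unif" by measurable
      then show ?thesis
        using Pair iid_unif_tie_null[of i j]
        by (cases "i = j") (auto intro!: AE_I'[where N="{\<omega>. \<omega> i = \<omega> j}"] simp: null_sets_def)
    qed
  qed (use assms in simp)
  then show ?thesis by eventually_elim (auto simp: inj_on_def)
qed

definition rank :: "nat \<Rightarrow> (nat \<Rightarrow> real) \<Rightarrow> nat \<Rightarrow> nat" where
  "rank n \<omega> i = (if i \<in> {1..n} then Suc (card {j\<in>{1..n}. \<omega> j < \<omega> i}) else i)"

lemma rank_less_iff:
  assumes "i \<in> {1..n}" "j \<in> {1..n}"
  shows "rank n \<omega> i < rank n \<omega> j \<longleftrightarrow> \<omega> i < \<omega> j"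
proof
  assume "\<omega> i < \<omega> j"
  then have "{l\<in>{1..n}. \<omega> l < \<omega> i} \<subset> {l\<in>{1..n}. \<omega> l < \<omega> j}"
    using assms by auto
  then have "card {l\<in>{1..n}. \<omega> l < \<omega> i} < card {l\<in>{1..n}. \<omega> l < \<omega> j}"
    by (intro psubset_card_mono) auto
  then show "rank n \<omega> i < rank n \<omega> j" using assms by (simp add: rank_def)
next
  assume less: "rank n \<omega> i < rank n \<omega> j"
  show "\<omega> i < \<omega> j"
  proof (rule ccontr)
    assume "\<not> \<omega> i < \<omega> j"
    then have "{l\<in>{1..n}. \<omega> l < \<omega> j} \<subseteq> {l\<in>{1..n}. \<omega> l < \<omega> i}" by auto
    then have "card {l\<in>{1..n}. \<omega> l < \<omega> j} \<le> card {l\<in>{1..n}. \<omega> l < \<omega> i}"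
      by (intro card_mono) auto
    with less show False using assms by (simp add: rank_def)
  qed
qed

lemma rank_permutes:
  assumes "inj_on \<omega> {1..n}"
  shows "rank n \<omega> permutes {1..n}"
proof (rule bij_imp_permutes)
  have inj: "inj_on (rank n \<omega>) {1..n}"
  proof (rule inj_onI)
    fix i j assume ij: "i \<in> {1..n}" "j \<in> {1..n}" "rank n \<omega> i = rank n \<omega> j"
    then have "\<not> \<omega> i < \<omega> j" "\<not> \<omega> j < \<omega> i"
      using rank_less_iff[of i n j \<omega>] rank_less_iff[of j n i \<omega>] by auto
    then show "i = j" using assms ij by (auto dest: inj_onD)
  qed
  have "rank n \<omega> ` {1..n} \<subseteq> {1..n}"
  proof
    fix x assume "x \<in> rank n \<omega> ` {1..n}"
    then obtain i where i: "i \<in> {1..n}" "x = rank n \<omega> i" by auto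
    have "card {j\<in>{1..n}. \<omega> j < \<omega> i} \<le> card ({1..n} - {i})" by (intro card_mono) auto
    then show "x \<in> {1..n}" using i by (simp add: rank_def; linarith)
  qed
  then have "rank n \<omega> ` {1..n} = {1..n}"
    using inj by (meson card_image card_subset_eq finite_atLeastAtMost)
  then show "bij_betw (rank n \<omega>) {1..n} {1..n}" using inj by (simp add: bij_betw_def)
qed (auto simp: rank_def)

lemma rank_reindex:
  assumes \<tau>: "\<tau> permutes {1..n}"
  shows "rank n (\<lambda>i. \<omega> (\<tau> i)) = rank n \<omega> \<circ> \<tau>"
proof
  fix i
  show "rank n (\<lambda>i. \<omega> (\<tau> i)) i = (rank n \<omega> \<circ> \<tau>) i"
  proof (cases "i \<in> {1..n}")
    case True
    then have "\<tau> i \<in> {1..n}" using permutes_in_image[OF \<tau>] by blast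
    moreover have "bij_betw \<tau> {j\<in>{1..n}. \<omega> (\<tau> j) < \<omega> (\<tau> i)} {j\<in>{1..n}. \<omega> j < \<omega> (\<tau> i)}"
      by (rule bij_betw_Collect[OF permutes_imp_bij[OF \<tau>]]) simp
    ultimately show ?thesis using True by (simp add: rank_def bij_betw_same_card)
  next
    case False
    then have "\<tau> i = i" using \<tau> by (simp add: permutes_not_in)
    with False show ?thesis by (auto simp: rank_def)
  qed
qed

lemma pred_card_Collect_eq:
  assumes "\<And>j. j \<in> S \<Longrightarrow> Measurable.pred M (P j)" and "finite S"
  shows "Measurable.pred M (\<lambda>x. card {j\<in>S. P j x} = c)"
proof -
  have "card {j\<in>S. P j x} = c \<longleftrightarrow> (\<exists>A\<in>Pow S. card A = c \<and> (\<forall>j\<in>S. j \<in> A \<longleftrightarrow> P j x))" for x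
  proof
    assume "\<exists>A\<in>Pow S. card A = c \<and> (\<forall>j\<in>S. j \<in> A \<longleftrightarrow> P j x)"
    then obtain A where "A \<subseteq> S" "card A = c" "\<forall>j\<in>S. j \<in> A \<longleftrightarrow> P j x" by auto
    moreover from this have "A = {j\<in>S. P j x}" by auto
    ultimately show "card {j\<in>S. P j x} = c" by simp
  qed auto
  then show ?thesis
    using assms by (simp only:) (intro pred_intros_finite pred_intros_logic; auto simp: pred_def)
qed

lemma sets_rank_eq: "{\<omega>. rank n \<omega> = \<sigma>} \<in> sets iid_unif"
proof -
  have [measurable]: "Measurable.pred iid_unif (\<lambda>\<omega>. card {j\<in>{1..n}. \<omega> j < \<omega> i} = c)" for i c
    by (rule pred_card_Collect_eq) auto
  have "{\<omega>. rank n \<omega> = \<sigma>} = {\<omega>\<in>space iid_unif. \<forall>i. if i \<in> {1..n}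
      then 1 \<le> \<sigma> i \<and> card {j\<in>{1..n}. \<omega> j < \<omega> i} = \<sigma> i - 1 else i = \<sigma> i}"
    by (auto simp: fun_eq_iff rank_def)
  also have "\<dots> \<in> sets iid_unif" by measurable
  finally show ?thesis .
qed

lemma AE_rank_permutes: "AE \<omega> in iid_unif. rank n \<omega> permutes {1..n}"
  using AE_iid_unif_inj_on[OF finite_atLeastAtMost[of 1 n]] by eventually_elim (rule rank_permutes)

lemma prob_rank_eq:
  assumes "\<sigma> permutes {1..n}"
  shows "iid.prob {\<omega>. rank n \<omega> = \<sigma>} = 1 / fact n"
proof -
  have exchangeable: "iid.prob {\<omega>. rank n \<omega> = \<sigma>'} = iid.prob {\<omega>. rank n \<omega> = \<sigma>' \<circ> inv \<tau>}"
    if \<tau>: "\<tau> permutes {1..n}" for \<tau> \<sigma>'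
  proof -
    have "iid.prob {\<omega>. rank n \<omega> = \<sigma>'}
        = measure (distr iid_unif iid_unif (\<lambda>\<omega> i. \<omega> (\<tau> i))) {\<omega>. rank n \<omega> = \<sigma>'}"
      by (simp add: distr_iid_unif_reindex permutes_inj[OF \<tau>])
    also have "\<dots> = iid.prob ((\<lambda>\<omega> i. \<omega> (\<tau> i)) -` {\<omega>. rank n \<omega> = \<sigma>'} \<inter> space iid_unif)"
      by (rule measure_distr) (auto simp: sets_rank_eq intro: measurable_iid_unif_reindex)
    also have "(\<lambda>\<omega> i. \<omega> (\<tau> i)) -` {\<omega>. rank n \<omega> = \<sigma>'} \<inter> space iid_unif = {\<omega>. rank n \<omega> = \<sigma>' \<circ> inv \<tau>}"
    proof -
      have "rank n \<omega> \<circ> \<tau> = \<sigma>' \<longleftrightarrow> rank n \<omega> = \<sigma>' \<circ> inv \<tau>" for \<omega>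
        using permutes_inv_o[OF \<tau>] by (metis comp_assoc comp_id)
      then show ?thesis using rank_reindex[OF \<tau>] by auto
    qed
    finally show ?thesis .
  qed
  define c where "c = iid.prob {\<omega>. rank n \<omega> = id}"
  have equal: "iid.prob {\<omega>. rank n \<omega> = \<sigma>'} = c" if "\<sigma>' permutes {1..n}" for \<sigma>'
    using exchangeable[OF that, of \<sigma>'] permutes_inv_o[OF that] by (simp add: c_def)
  define S where "S = {\<sigma>'. \<sigma>' permutes {1..n}}"
  have "finite S" unfolding S_def by (rule finite_permutations) simp
  have total: "iid.prob (\<Union>\<sigma>'\<in>S. {\<omega>. rank n \<omega> = \<sigma>'}) = 1"
  proof (subst iid.prob_eq_1)
    show "AE \<omega> in iid_unif. \<omega> \<in> (\<Union>\<sigma>'\<in>S. {\<omega>. rank n \<omega> = \<sigma>'})"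
      using AE_rank_permutes[of n] by eventually_elim (auto simp: S_def)
  qed (use \<open>finite S\<close> in \<open>auto simp: sets_rank_eq\<close>)
  have "iid.prob (\<Union>\<sigma>'\<in>S. {\<omega>. rank n \<omega> = \<sigma>'}) = (\<Sum>\<sigma>'\<in>S. iid.prob {\<omega>. rank n \<omega> = \<sigma>'})"
    by (rule measure_finite_Union) (auto simp: \<open>finite S\<close> sets_rank_eq disjoint_family_on_def)
  also have "\<dots> = fact n * c"
    using equal card_permutations[of "{1..n}" n] by (simp add: S_def)
  finally show ?thesis using total equal[OF assms] by (simp add: field_simps)
qed

lemma prob_rank_in:
  assumes "B \<subseteq> {\<sigma>. \<sigma> permutes {1..n}}"
  shows "iid.prob {\<omega>. rank n \<omega> \<in> B} = card B / fact n"
proof -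
  have "finite B"
    using assms finite_permutations[of "{1..n}"] by (auto intro: finite_subset)
  have "{\<omega>. rank n \<omega> \<in> B} = (\<Union>\<sigma>\<in>B. {\<omega>. rank n \<omega> = \<sigma>})" by auto
  also have "iid.prob \<dots> = (\<Sum>\<sigma>\<in>B. iid.prob {\<omega>. rank n \<omega> = \<sigma>})"
    by (rule measure_finite_Union) (auto simp: \<open>finite B\<close> sets_rank_eq disjoint_family_on_def)
  also have "\<dots> = (\<Sum>\<sigma>\<in>B. 1 / fact n)"
    using assms by (intro sum.cong) (auto simp: prob_rank_eq)
  finally show ?thesis by simp
qed

definition ascending :: "nat \<Rightarrow> nat \<Rightarrow> (nat \<Rightarrow> 'a::linorder) \<Rightarrow> bool" where
  "ascending L s f \<longleftrightarrow> (\<forall>j\<in>{s..<s + L - 1}. f j < f (Suc j))"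

definition asc_indicator :: "nat \<Rightarrow> nat \<Rightarrow> (nat \<Rightarrow> real) \<Rightarrow> real" where
  "asc_indicator L s \<omega> = of_bool (ascending L s \<omega>)"

definition run_starts :: "nat \<Rightarrow> nat \<Rightarrow> nat set" where
  "run_starts k n = {i. 1 \<le> i \<and> i + k - 1 \<le> n}"

definition run_count :: "nat \<Rightarrow> nat \<Rightarrow> (nat \<Rightarrow> real) \<Rightarrow> real" where
  "run_count k n \<omega> = (\<Sum>i\<in>run_starts k n. asc_indicator k i \<omega>)"

lemma finite_run_starts[simp]: "finite (run_starts k n)"
  by (rule finite_subset[of _ "{..Suc n}"]) (auto simp: run_starts_def)

lemma pred_ascending[measurable]: "Measurable.pred iid_unif (ascending L s)"
  unfolding ascending_def by (rule pred_intros_finite(3)) measurable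

lemma measurable_asc_indicator[measurable]: "asc_indicator L s \<in> borel_measurable iid_unif"
  unfolding asc_indicator_def[abs_def] by measurable

lemma measurable_run_count[measurable]: "run_count k n \<in> borel_measurable iid_unif"
  unfolding run_count_def[abs_def] by measurable

lemma tight_incr_count_eq: "tight_incr_count k n p = card {i\<in>run_starts k n. ascending k i p}"
  unfolding tight_incr_count_def run_starts_def ascending_def by (auto intro!: arg_cong[where f=card])

lemma ascending_rank_iff:
  assumes "1 \<le> s" "s + L - 1 \<le> n"
  shows "ascending L s (rank n \<omega>) \<longleftrightarrow> ascending L s \<omega>"
  unfolding ascending_def using assms by (intro ball_cong refl rank_less_iff) auto

lemma Y_rank: "Y k n (rank n \<omega>) = run_count k n \<omega>"
proof -
  have "{i\<in>run_starts k n. ascending k i (rank n \<omega>)} = {i\<in>run_starts k n. ascending k i \<omega>}"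
    by (auto simp: run_starts_def ascending_rank_iff)
  then show ?thesis
    by (simp add: Y_def tight_incr_count_eq run_count_def asc_indicator_def sum_of_bool_eq Int_def)
qed

lemma distr_run_count_eq_distr_Y:
  "distr iid_unif borel (run_count k n) = distr (measure_pmf (unif_perm n)) borel (Y k n)"
proof (rule measure_eqI)
  fix A :: "real set" assume "A \<in> sets (distr iid_unif borel (run_count k n))"
  then have A: "A \<in> sets borel" by simp
  define S where "S = {\<sigma>. \<sigma> permutes {1..n}}"
  have "finite S" "card S = fact n"
    using finite_permutations[of "{1..n}"] card_permutations[of "{1..n}" n] by (auto simp: S_def)
  have "S \<noteq> {}"
    using permutes_id unfolding S_def by blast
  define B where "B = {\<sigma>\<in>S. Y k n \<sigma> \<in> A}"
  have "emeasure (distr iid_unif borel (run_count k n)) A = emeasure iid_unif (run_count k n -` A)"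
    using emeasure_distr[OF measurable_run_count A] by simp
  also have "\<dots> = emeasure iid_unif {\<omega>. rank n \<omega> \<in> B}"
  proof (rule emeasure_eq_AE)
    show "AE \<omega> in iid_unif. \<omega> \<in> run_count k n -` A \<longleftrightarrow> \<omega> \<in> {\<omega>. rank n \<omega> \<in> B}"
      using AE_rank_permutes[of n] by eventually_elim (auto simp: B_def S_def Y_rank[symmetric])
    show "run_count k n -` A \<in> sets iid_unif"
      using measurable_sets[OF measurable_run_count A] by simp
    have "{\<omega>. rank n \<omega> \<in> B} = (\<Union>\<sigma>\<in>B. {\<omega>. rank n \<omega> = \<sigma>})" by auto
    then show "{\<omega>. rank n \<omega> \<in> B} \<in> sets iid_unif"
      using \<open>finite S\<close> by (auto simp: B_def sets_rank_eq)
  qed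
  also have "\<dots> = card B / card S"
  proof -
    have "B \<subseteq> {\<sigma>. \<sigma> permutes {1..n}}" by (auto simp: B_def S_def)
    from prob_rank_in[OF this] show ?thesis
      using \<open>card S = fact n\<close> by (simp add: iid.emeasure_eq_measure)
  qed
  also have "\<dots> = emeasure (measure_pmf (unif_perm n)) (Y k n -` A)"
    unfolding unif_perm_def S_def[symmetric] using \<open>finite S\<close> \<open>S \<noteq> {}\<close>
    by (simp add: emeasure_pmf_of_set B_def Int_def)
  also have "\<dots> = emeasure (distr (measure_pmf (unif_perm n)) borel (Y k n)) A"
    using emeasure_distr[of "Y k n" _ borel A] A by simp
  finally show "emeasure (distr iid_unif borel (run_count k n)) A
      = emeasure (distr (measure_pmf (unif_perm n)) borel (Y k n)) A" .
qed simp

lemma ascending_less: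
  fixes f :: "nat \<Rightarrow> 'a::linorder"
  assumes "ascending L s f" "s \<le> i" "i < j" "j \<le> s + L - 1"
  shows "f i < f j"
  using assms(3,4)
proof (induction j)
  case (Suc j)
  have "f j < f (Suc j)" using assms(1,2) Suc.prems by (auto simp: ascending_def)
  then show ?case using Suc by (cases "i = j") auto
qed simp

lemma ascending_1_iff_rank_eq_id: "ascending L 1 \<omega> \<longleftrightarrow> rank L \<omega> = id"
proof
  assume asc: "ascending L 1 \<omega>"
  have "{j\<in>{1..L}. \<omega> j < \<omega> i} = {1..<i}" if "i \<in> {1..L}" for i
  proof -
    have "\<omega> j < \<omega> i \<longleftrightarrow> j < i" if "j \<in> {1..L}" for j
      using ascending_less[OF asc, of j i] ascending_less[OF asc, of i j] \<open>i \<in> {1..L}\<close> that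
      by (cases i j rule: linorder_cases) auto
    then show ?thesis using that by auto
  qed
  then show "rank L \<omega> = id"
    by (auto simp: rank_def fun_eq_iff)
next
  assume rank_id: "rank L \<omega> = id"
  show "ascending L 1 \<omega>"
    unfolding ascending_def
  proof
    fix j assume "j \<in> {1..<1 + L - 1}"
    then show "\<omega> j < \<omega> (Suc j)" using rank_less_iff[of j L "Suc j" \<omega>] rank_id by simp
  qed
qed

lemma ascending_shift: "ascending L (s + d) f \<longleftrightarrow> ascending L s (\<lambda>i. f (i + d))"
proof
  assume asc: "ascending L (s + d) f"
  show "ascending L s (\<lambda>i. f (i + d))"
    unfolding ascending_def
  proof
    fix j assume "j \<in> {s..<s + L - 1}"
    then have "j + d \<in> {s + d..<s + d + L - 1}" by auto
    then show "f (j + d) < f (Suc j + d)" using asc by (auto simp: ascending_def)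
  qed
next
  assume asc: "ascending L s (\<lambda>i. f (i + d))"
  show "ascending L (s + d) f"
    unfolding ascending_def
  proof
    fix j assume j: "j \<in> {s + d..<s + d + L - 1}"
    then have "j - d \<in> {s..<s + L - 1}" by auto
    then have "f (j - d + d) < f (Suc (j - d) + d)" using asc by (auto simp: ascending_def)
    then show "f j < f (Suc j)" using j by (simp add: Suc_diff_le)
  qed
qed

lemma prob_UNIV_iid_unif[simp]: "iid.prob UNIV = 1"
  using iid.prob_space by simp

lemma integrable_asc_indicator[simp]: "integrable iid_unif (asc_indicator L s)"
  by (rule iid.integrable_const_bound[of _ 1]) (auto simp: asc_indicator_def)

lemma expectation_asc_indicator:
  assumes "1 \<le> s"
  shows "iid.expectation (asc_indicator L s) = 1 / fact L"
proof -
  have "asc_indicator L s \<omega> = asc_indicator L 1 (\<lambda>i. \<omega> (i + (s - 1)))" for \<omega>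
    using assms ascending_shift[of L 1 "s - 1" \<omega>] by (simp add: asc_indicator_def)
  then have "asc_indicator L s = (\<lambda>\<omega>. asc_indicator L 1 (\<lambda>i. \<omega> (i + (s - 1))))"
    by (rule ext)
  then have "iid.expectation (asc_indicator L s) = iid.expectation (\<lambda>\<omega>. asc_indicator L 1 (\<lambda>i. \<omega> (i + (s - 1))))"
    by simp
  also have "\<dots> = iid.expectation (asc_indicator L 1)"
    by (rule integral_iid_unif_shift) simp
  also have "asc_indicator L 1 = indicator {\<omega>. rank L \<omega> = id}"
    unfolding asc_indicator_def ascending_1_iff_rank_eq_id by (simp add: fun_eq_iff indicator_def)
  also have "iid.expectation \<dots> = iid.prob {\<omega>. rank L \<omega> = id}"
    by (simp add: sets_rank_eq)
  also have "\<dots> = 1 / fact L"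
    by (rule prob_rank_eq) (rule permutes_id)
  finally show ?thesis .
qed

lemma asc_indicator_mult_overlapping:
  assumes "s \<le> t" "t < s + k"
  shows "asc_indicator k s \<omega> * asc_indicator k t \<omega> = asc_indicator (t - s + k) s \<omega>"
proof -
  have "{s..<s + (t - s + k) - 1} = {s..<s + k - 1} \<union> {t..<t + k - 1}"
    using assms by auto
  then show ?thesis by (simp add: asc_indicator_def ascending_def ball_Un)
qed

lemma measurable_asc_indicator_PiM:
  assumes "{s..<s + L} \<subseteq> K"
  shows "asc_indicator L s \<in> PiM K (\<lambda>_. unif01) \<rightarrow>\<^sub>M borel"
proof -
  have "Measurable.pred (PiM K (\<lambda>_. unif01)) (ascending L s)"
    unfolding ascending_def using assms
    by (intro pred_intros_finite(3)) (auto intro!: borel_measurable_pred_less measurable_component_unif01)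
  then show ?thesis unfolding asc_indicator_def[abs_def] by measurable
qed

lemma asc_indicator_restrict:
  assumes "{s..<s + L} \<subseteq> K"
  shows "asc_indicator L s (restrict \<omega> K) = asc_indicator L s \<omega>"
proof -
  have "j \<in> K" if "s \<le> j" "j < s + L" for j using assms that by auto
  then show ?thesis unfolding asc_indicator_def ascending_def by (intro arg_cong[where f=of_bool] ball_cong) auto
qed

lemma expectation_asc_indicator_mult_apart:
  assumes "s + k \<le> t"
  shows "iid.expectation (\<lambda>\<omega>. asc_indicator k s \<omega> * asc_indicator k t \<omega>)
    = iid.expectation (asc_indicator k s) * iid.expectation (asc_indicator k t)"
proof -
  define K where "K = case_bool {s..<s + k} {t..<t + k}"
  have "iid.indep_vars (\<lambda>_. borel) (case_bool (asc_indicator k s) (asc_indicator k t)) UNIV"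
  proof (rule indep_vars_iid_unif_blocks[where K=K])
    show "disjoint_family_on K UNIV"
      using assms by (auto simp: disjoint_family_on_def K_def split: bool.split)
    show "case_bool (asc_indicator k s) (asc_indicator k t) b \<omega>
        = case_bool (asc_indicator k s) (asc_indicator k t) b (restrict \<omega> (K b))"
      for b \<omega> by (cases b) (simp_all add: K_def asc_indicator_restrict)
  qed (auto simp: K_def measurable_asc_indicator_PiM split: bool.split)
  moreover have "(\<lambda>_. borel) = case_bool borel (borel :: real measure)"
    by (simp add: fun_eq_iff split: bool.split)
  ultimately have "iid.indep_var borel (asc_indicator k s) borel (asc_indicator k t)"
    unfolding iid.indep_var_def by simp
  then show ?thesis by (rule iid.indep_var_lebesgue_integral) simp_all
qed

section \<open>The covariance structure\<close>

lemma two_mul_le_fact: "3 \<le> n \<Longrightarrow> 2 * n \<le> fact n"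
proof -
  assume "3 \<le> n"
  then have "fact 2 \<le> (fact (n - 1) :: nat)"
    by (intro fact_mono) simp
  then have "2 \<le> (fact (n - 1) :: nat)"
    by (simp add: numeral_2_eq_2)
  moreover have "fact n = n * fact (n - 1)"
    using \<open>3 \<le> n\<close> by (simp add: fact_reduce)
  ultimately show ?thesis by simp
qed

definition gap :: "nat \<Rightarrow> nat \<Rightarrow> nat" where
  "gap i j = (if i \<le> j then j - i else i - j)"

locale ascending_runs =
  fixes k :: nat
  assumes two_le_k: "2 \<le> k"
begin

definition mu :: real where
  "mu = 1 / fact k"

text \<open>Windows at distance \<open>d < k\<close> overlap, and both ascend iff their union, a window of length
  \<open>k + d\<close>, ascends.\<close>

definition cov :: "nat \<Rightarrow> real" where
  "cov d = (if d < k then 1 / fact (k + d) - mu\<^sup>2 else 0)"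

definition centered :: "nat \<Rightarrow> (nat \<Rightarrow> real) \<Rightarrow> real" where
  "centered i \<omega> = asc_indicator k i \<omega> - mu"

definition cov_sum :: "nat set \<Rightarrow> real" where
  "cov_sum G = (\<Sum>i\<in>G. \<Sum>j\<in>G. cov (gap i j))"

lemma one_le_k: "1 \<le> k"
  using two_le_k by simp

lemma mu_pos: "0 < mu"
  by (simp add: mu_def)

lemma mu_le_1: "mu \<le> 1"
  by (simp add: mu_def)

lemma expectation_asc_indicator_k: "1 \<le> i \<Longrightarrow> iid.expectation (asc_indicator k i) = mu"
  by (simp add: expectation_asc_indicator mu_def)

lemma measurable_centered[measurable]: "centered i \<in> borel_measurable iid_unif"
  unfolding centered_def[abs_def] by measurable

lemma abs_centered_le_1: "\<bar>centered i \<omega>\<bar> \<le> 1"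
  using mu_pos mu_le_1 by (auto simp: centered_def asc_indicator_def)

lemma integrable_centered[simp]: "integrable iid_unif (centered i)"
  by (rule iid.integrable_const_bound[of _ 1]) (auto simp: abs_centered_le_1)

lemma integrable_centered_mult[simp]: "integrable iid_unif (\<lambda>\<omega>. centered i \<omega> * centered j \<omega>)"
  using abs_centered_le_1[of i] abs_centered_le_1[of j]
  by (intro iid.integrable_const_bound[of _ 1]) (auto simp: abs_mult intro!: mult_le_one)

lemma expectation_centered: "1 \<le> i \<Longrightarrow> iid.expectation (centered i) = 0"
  unfolding centered_def by (simp add: expectation_asc_indicator_k)

lemma expectation_asc_indicator_mult:
  assumes "1 \<le> i" "i \<le> j"
  shows "iid.expectation (\<lambda>\<omega>. asc_indicator k i \<omega> * asc_indicator k j \<omega>) = cov (j - i) + mu\<^sup>2"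
proof (cases "j < i + k")
  case True
  then have "iid.expectation (\<lambda>\<omega>. asc_indicator k i \<omega> * asc_indicator k j \<omega>)
      = iid.expectation (asc_indicator (j - i + k) i)"
    using asc_indicator_mult_overlapping[OF assms(2) True] by simp
  also have "\<dots> = 1 / fact (j - i + k)"
    using assms by (simp add: expectation_asc_indicator)
  finally show ?thesis using True by (simp add: cov_def add.commute less_diff_conv2 assms(2))
next
  case False
  then have "iid.expectation (\<lambda>\<omega>. asc_indicator k i \<omega> * asc_indicator k j \<omega>) = mu * mu"
    using expectation_asc_indicator_mult_apart[of i k j] assms by (simp add: expectation_asc_indicator_k)
  moreover have "\<not> j - i < k" using False assms by linarith
  ultimately show ?thesis by (simp add: cov_def power2_eq_square)
qed

lemma expectation_centered_mult:
  assumes "1 \<le> i" "1 \<le> j"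
  shows "iid.expectation (\<lambda>\<omega>. centered i \<omega> * centered j \<omega>) = cov (gap i j)"
proof -
  have "iid.expectation (\<lambda>\<omega>. asc_indicator k i \<omega> * asc_indicator k j \<omega>) = cov (gap i j) + mu\<^sup>2"
    using expectation_asc_indicator_mult[of i j] expectation_asc_indicator_mult[of j i] assms
    by (cases "i \<le> j") (simp_all add: gap_def mult.commute)
  moreover have "integrable iid_unif (\<lambda>\<omega>. asc_indicator k i \<omega> * asc_indicator k j \<omega>)"
    by (rule iid.integrable_const_bound[of _ 1]) (auto simp: asc_indicator_def)
  ultimately show ?thesis
    using assms by (simp add: centered_def algebra_simps expectation_asc_indicator_k power2_eq_square)
qed

lemma expectation_sum_centered_sq:
  assumes "finite G" "\<And>i. i \<in> G \<Longrightarrow> 1 \<le> i"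
  shows "iid.expectation (\<lambda>\<omega>. (\<Sum>i\<in>G. centered i \<omega>)\<^sup>2) = cov_sum G"
proof -
  have "iid.expectation (\<lambda>\<omega>. (\<Sum>i\<in>G. centered i \<omega>)\<^sup>2)
      = iid.expectation (\<lambda>\<omega>. \<Sum>i\<in>G. \<Sum>j\<in>G. centered i \<omega> * centered j \<omega>)"
    by (simp add: power2_eq_square sum_product)
  also have "\<dots> = (\<Sum>i\<in>G. \<Sum>j\<in>G. iid.expectation (\<lambda>\<omega>. centered i \<omega> * centered j \<omega>))"
    by (simp add: integrable_sum)
  also have "\<dots> = cov_sum G"
    unfolding cov_sum_def using assms(2) by (intro sum.cong refl) (simp add: expectation_centered_mult)
  finally show ?thesis .
qed

lemma abs_cov_le_1: "\<bar>cov d\<bar> \<le> 1"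
proof -
  have "0 \<le> mu\<^sup>2" "mu\<^sup>2 \<le> 1" "0 \<le> 1 / (fact (k + d) :: real)" "1 / fact (k + d) \<le> (1::real)"
    using mu_pos mu_le_1 by (auto simp: power_le_one divide_le_eq)
  then show ?thesis
    unfolding cov_def abs_le_iff by (cases "d < k") (simp_all only: if_True if_False; linarith)+
qed

lemma cov_sum_le:
  assumes "finite G"
  shows "cov_sum G \<le> real (2 * k - 1) * card G"
proof -
  have row: "(\<Sum>j\<in>G. cov (gap i j)) \<le> real (2 * k - 1)" for i
  proof -
    have near: "{j. gap i j < k} \<subseteq> {i + 1 - k..<i + k}"
      by (auto simp: gap_def)
    have "(\<Sum>j\<in>G. cov (gap i j)) = (\<Sum>j\<in>G \<inter> {j. gap i j < k}. cov (gap i j))"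
      using assms by (intro sum.mono_neutral_right) (auto simp: cov_def)
    also have "\<dots> \<le> card (G \<inter> {j. gap i j < k})"
      using abs_cov_le_1 sum_mono[of _ "\<lambda>j. cov (gap i j)" "\<lambda>_. 1"] by (simp add: abs_le_iff)
    also have "card (G \<inter> {j. gap i j < k}) \<le> card {i + 1 - k..<i + k}"
      using near by (intro card_mono) auto
    also have "card {i + 1 - k..<i + k} \<le> 2 * k - 1"
      by simp
    finally show ?thesis by simp
  qed
  have "cov_sum G \<le> (\<Sum>i\<in>G. real (2 * k - 1))"
    unfolding cov_sum_def by (intro sum_mono row)
  then show ?thesis by (simp add: mult.commute)
qed

end

context ascending_runs
begin

definition block_var :: "nat \<Rightarrow> real" where
  "block_var N = cov_sum {..<N}"

definition sigma2 :: real where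
  "sigma2 = cov 0 + 2 * (\<Sum>d\<in>{1..<k}. cov d)"

definition var_offset :: real where
  "var_offset = block_var (k - 1) - real (k - 1) * sigma2"

lemma gap_add: "gap (i + a) (j + a) = gap i j"
  by (simp add: gap_def)

lemma cov_sum_shift: "cov_sum {a..<a + N} = block_var N"
proof -
  have "{a..<a + N} = {0 + a..<N + a}"
    by (simp add: add.commute)
  then have "cov_sum {a..<a + N} = (\<Sum>i<N. \<Sum>j<N. cov (gap (i + a) (j + a)))"
    by (simp only: cov_sum_def sum.shift_bounds_nat_ivl atLeast0LessThan)
  also have "\<dots> = block_var N"
    by (simp add: block_var_def cov_sum_def gap_add)
  finally show ?thesis .
qed

lemma block_var_Suc: "block_var (Suc N) = block_var N + 2 * (\<Sum>j<N. cov (N - j)) + cov 0"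
proof -
  have "block_var (Suc N) = (\<Sum>i<N. (\<Sum>j<N. cov (gap i j)) + cov (gap i N)) + ((\<Sum>j<N. cov (gap N j)) + cov 0)"
    by (simp add: block_var_def cov_sum_def gap_def)
  also have "\<dots> = block_var N + (\<Sum>i<N. cov (N - i)) + (\<Sum>j<N. cov (N - j)) + cov 0"
    by (simp add: block_var_def cov_sum_def sum.distrib gap_def)
  finally show ?thesis by simp
qed

lemma sum_cov_lags: "k - 1 \<le> N \<Longrightarrow> (\<Sum>j<N. cov (N - j)) = (\<Sum>d\<in>{1..<k}. cov d)"
proof -
  assume "k - 1 \<le> N"
  have "(\<Sum>j<N. cov (N - j)) = (\<Sum>d\<in>{1..N}. cov d)"
    by (rule sum.reindex_bij_witness[where i="\<lambda>d. N - d" and j="\<lambda>j. N - j"]) auto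
  also have "\<dots> = (\<Sum>d\<in>{1..<k}. cov d)"
    using \<open>k - 1 \<le> N\<close> by (intro sum.mono_neutral_right) (auto simp: cov_def)
  finally show ?thesis .
qed

lemma block_var_affine: "k - 1 \<le> N \<Longrightarrow> block_var N = real N * sigma2 + var_offset"
proof (induction N rule: dec_induct)
  case (step N)
  then show ?case
    using block_var_Suc[of N] sum_cov_lags[of N] by (simp add: sigma2_def algebra_simps)
qed (simp add: var_offset_def)

lemma sigma2_lower_bound: "mu * (1 - (2 * k - 1) * mu + 2 / (k + 1)) \<le> sigma2"
proof -
  define S where "S = (\<Sum>d\<in>{1..<k}. 1 / (fact (k + d) :: real))"
  have "1 / fact (k + 1) \<le> S"
    unfolding S_def using two_le_k by (intro member_le_sum) auto
  moreover have "1 / fact (k + 1) = mu / (k + 1)"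
    by (simp add: mu_def field_simps)
  ultimately have S_ge: "mu / (k + 1) \<le> S" by simp
  have "(\<Sum>d\<in>{1..<k}. cov d) = S - (k - 1) * mu\<^sup>2"
    using one_le_k by (simp add: S_def cov_def sum_subtractf of_nat_diff)
  moreover have "cov 0 = mu - mu\<^sup>2"
    using one_le_k by (simp add: cov_def mu_def)
  ultimately have "sigma2 = mu - (2 * k - 1) * mu\<^sup>2 + 2 * S"
    using one_le_k by (simp add: sigma2_def algebra_simps of_nat_diff)
  moreover have "mu * (1 - (2 * k - 1) * mu + 2 / (k + 1)) = mu - (2 * k - 1) * mu\<^sup>2 + 2 * (mu / (k + 1))"
    by (simp add: field_simps power2_eq_square)
  ultimately show ?thesis
    using S_ge by linarith
qed

lemma sigma2_pos: "0 < sigma2"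
proof -
  have "(2 * k - 1) * mu < 1 + 2 / (k + 1)"
  proof (cases "k = 2")
    case True
    then have "mu = 1 / 2" unfolding mu_def by (simp add: fact_numeral)
    with True show ?thesis by simp
  next
    case False
    then have "3 \<le> k" using two_le_k by simp
    then have "real (2 * k) \<le> fact k" using two_mul_le_fact by (metis of_nat_fact of_nat_le_iff)
    then have "(2 * k - 1) * mu < 1" using one_le_k by (simp add: mu_def field_simps of_nat_diff)
    moreover have "0 \<le> 2 / real (k + 1)" by simp
    ultimately show ?thesis by linarith
  qed
  then have "0 < mu * (1 - (2 * k - 1) * mu + 2 / (k + 1))"
    using mu_pos by (intro mult_pos_pos) auto
  with sigma2_lower_bound show ?thesis by linarith
qed

end

section \<open>Big blocks and small blocks\<close>

context ascending_runs
begin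

text \<open>Big blocks of \<open>p\<close> consecutive starting indices are separated by gaps of \<open>k - 1\<close> indices;
  the indicators of a big block only depend on the coordinates in its window, and distinct windows are
  disjoint, so the block sums are i.i.d.\<close>

definition period :: "nat \<Rightarrow> nat" where
  "period p = p + k - 1"

definition big_block :: "nat \<Rightarrow> nat \<Rightarrow> nat set" where
  "big_block p b = {1 + b * period p..<1 + b * period p + p}"

definition block_window :: "nat \<Rightarrow> nat \<Rightarrow> nat set" where
  "block_window p b = {1 + b * period p..<1 + b * period p + period p}"

definition block_sum :: "nat \<Rightarrow> nat \<Rightarrow> (nat \<Rightarrow> real) \<Rightarrow> real" where
  "block_sum p b \<omega> = (\<Sum>i\<in>big_block p b. centered i \<omega>)"

lemma le_period: "p \<le> period p"
  using one_le_k by (simp add: period_def)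

lemma period_pos: "0 < period p"
  using two_le_k by (simp add: period_def)

lemma finite_big_block[simp]: "finite (big_block p b)"
  by (simp add: big_block_def)

lemma card_big_block[simp]: "card (big_block p b) = p"
  by (simp add: big_block_def)

lemma big_block_subset_block_window: "big_block p b \<subseteq> block_window p b"
  using le_period[of p] by (auto simp: big_block_def block_window_def)

lemma disjoint_family_block_window: "disjoint_family (block_window p)"
proof -
  have "(x - 1) div period p = b" if "x \<in> block_window p b" for x b
    using that by (intro div_nat_eqI) (auto simp: block_window_def algebra_simps)
  then show ?thesis by (auto simp: disjoint_family_on_def)
qed

lemma disjoint_family_big_block: "disjoint_family (big_block p)"
  using disjoint_family_block_window big_block_subset_block_window
  unfolding disjoint_family_on_def by blast

lemma measurable_block_sum[measurable]: "block_sum p b \<in> borel_measurable iid_unif"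
  unfolding block_sum_def[abs_def] by measurable

lemma indep_vars_block_sum: "iid.indep_vars (\<lambda>_. borel) (block_sum p) UNIV"
proof (rule indep_vars_iid_unif_blocks[where K="block_window p"])
  have window: "{i..<i + k} \<subseteq> block_window p b" if "i \<in> big_block p b" for i b
    using that one_le_k by (auto simp: big_block_def block_window_def period_def)
  show "disjoint_family (block_window p)"
    by (rule disjoint_family_block_window)
  show "(\<lambda>f. \<Sum>i\<in>big_block p b. asc_indicator k i f - mu) \<in> PiM (block_window p b) (\<lambda>_. unif01) \<rightarrow>\<^sub>M borel" for b
    by (intro borel_measurable_sum borel_measurable_diff borel_measurable_const measurable_asc_indicator_PiM window)
  show "block_sum p b \<omega> = (\<Sum>i\<in>big_block p b. asc_indicator k i (restrict \<omega> (block_window p b)) - mu)" for b \<omega>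
    unfolding block_sum_def centered_def by (intro sum.cong refl) (simp add: asc_indicator_restrict window)
qed

lemma block_sum_shift: "block_sum p b \<omega> = block_sum p 0 (\<lambda>i. \<omega> (i + b * period p))"
proof -
  have "big_block p b = (\<lambda>i. i + b * period p) ` big_block p 0"
    by (simp add: big_block_def image_add_atLeastLessThan add_ac)
  then have "block_sum p b \<omega> = (\<Sum>i\<in>big_block p 0. centered (i + b * period p) \<omega>)"
    unfolding block_sum_def by (simp add: sum.reindex inj_on_def)
  also have "\<dots> = block_sum p 0 (\<lambda>i. \<omega> (i + b * period p))"
    unfolding block_sum_def centered_def asc_indicator_def ascending_shift ..
  finally show ?thesis .
qed

lemma distr_block_sum: "distr iid_unif borel (block_sum p b) = distr iid_unif borel (block_sum p 0)"
proof -
  have "block_sum p b = (\<lambda>\<omega>. block_sum p 0 (\<lambda>i. \<omega> (i + b * period p)))"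
    by (rule ext) (rule block_sum_shift)
  then show ?thesis by (simp add: distr_iid_unif_shift)
qed

lemma expectation_block_sum: "iid.expectation (block_sum p b) = 0"
  unfolding block_sum_def
  by (subst Bochner_Integration.integral_sum) (auto simp: expectation_centered big_block_def)

lemma expectation_block_sum_sq: "iid.expectation (\<lambda>\<omega>. (block_sum p b \<omega>)\<^sup>2) = block_var p"
proof -
  have "iid.expectation (\<lambda>\<omega>. (block_sum p b \<omega>)\<^sup>2) = cov_sum (big_block p b)"
    unfolding block_sum_def by (rule expectation_sum_centered_sq) (auto simp: big_block_def)
  also have "\<dots> = block_var p"
    unfolding big_block_def by (rule cov_sum_shift)
  finally show ?thesis .
qed

lemma abs_block_sum_le: "\<bar>block_sum p b \<omega>\<bar> \<le> p"
proof -
  have "\<bar>block_sum p b \<omega>\<bar> \<le> (\<Sum>i\<in>big_block p b. \<bar>centered i \<omega>\<bar>)"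
    unfolding block_sum_def by (rule sum_abs)
  also have "\<dots> \<le> (\<Sum>i\<in>big_block p b. 1)"
    by (intro sum_mono abs_centered_le_1)
  finally show ?thesis by simp
qed

lemma integrable_block_sum_sq: "integrable iid_unif (\<lambda>\<omega>. (block_sum p b \<omega>)\<^sup>2)"
proof (rule iid.integrable_const_bound[of _ "real p ^ 2"])
  show "AE \<omega> in iid_unif. norm ((block_sum p b \<omega>)\<^sup>2) \<le> real p ^ 2"
    using power_mono[OF abs_block_sum_le abs_ge_zero, of p b _ 2] by simp
qed simp

lemma clt_block_sum:
  assumes "0 < block_var p"
  shows "weak_conv_m (\<lambda>N. distr iid_unif borel (\<lambda>\<omega>. (\<Sum>b<N. block_sum p b \<omega>) / sqrt (N * block_var p)))
    std_normal_distribution"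
proof -
  have "weak_conv_m (\<lambda>N. distr iid_unif borel
      (\<lambda>\<omega>. (\<Sum>b<N. block_sum p b \<omega>) / sqrt (N * (sqrt (block_var p))\<^sup>2))) std_normal_distribution"
  proof (rule iid.central_limit_theorem_zero_mean)
    show "iid.indep_vars (\<lambda>_. borel) (block_sum p) UNIV"
      by (rule indep_vars_block_sum)
    show "iid.variance (block_sum p b) = (sqrt (block_var p))\<^sup>2" for b
      using assms by (simp add: expectation_block_sum expectation_block_sum_sq)
    show "iid.expectation (block_sum p b) = 0" for b
      by (rule expectation_block_sum)
    show "0 < sqrt (block_var p)"
      using assms by simp
    show "integrable iid_unif (\<lambda>\<omega>. (block_sum p b \<omega>)\<^sup>2)" for b
      by (rule integrable_block_sum_sq)
    show "distr iid_unif borel (block_sum p b) = distr iid_unif borel (block_sum p 0)" for b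
      by (rule distr_block_sum)
  qed
  then show ?thesis using assms by simp
qed

end

context ascending_runs
begin

definition num_starts :: "nat \<Rightarrow> nat" where
  "num_starts n = n + 1 - k"

definition count_var :: "nat \<Rightarrow> real" where
  "count_var n = block_var (num_starts n)"

definition num_blocks :: "nat \<Rightarrow> nat \<Rightarrow> nat" where
  "num_blocks p n = num_starts n div period p"

definition leftover_starts :: "nat \<Rightarrow> nat \<Rightarrow> nat set" where
  "leftover_starts p n = run_starts k n - (\<Union>b<num_blocks p n. big_block p b)"

lemma run_starts_eq_num_starts: "run_starts k n = {1..<1 + num_starts n}"
  using one_le_k by (auto simp: run_starts_def num_starts_def)

lemma run_count_minus_mean: "run_count k n \<omega> - num_starts n * mu = (\<Sum>i\<in>run_starts k n. centered i \<omega>)"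
  by (simp add: run_count_def centered_def sum_subtractf run_starts_eq_num_starts)

lemma expectation_run_count: "iid.expectation (run_count k n) = num_starts n * mu"
proof -
  have "iid.expectation (run_count k n) = (\<Sum>i\<in>run_starts k n. iid.expectation (asc_indicator k i))"
    unfolding run_count_def[abs_def] by (rule Bochner_Integration.integral_sum) simp
  also have "\<dots> = (\<Sum>i\<in>run_starts k n. mu)"
    by (intro sum.cong refl expectation_asc_indicator_k) (simp add: run_starts_def)
  finally show ?thesis by (simp add: run_starts_eq_num_starts)
qed

lemma expectation_run_count_dev_sq:
  "iid.expectation (\<lambda>\<omega>. (run_count k n \<omega> - num_starts n * mu)\<^sup>2) = count_var n"
proof -
  have "iid.expectation (\<lambda>\<omega>. (run_count k n \<omega> - num_starts n * mu)\<^sup>2) = cov_sum (run_starts k n)"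
    unfolding run_count_minus_mean by (rule expectation_sum_centered_sq) (auto simp: run_starts_eq_num_starts)
  then show ?thesis
    using cov_sum_shift[of 1 "num_starts n"] by (simp add: count_var_def run_starts_eq_num_starts)
qed

lemma big_block_subset_run_starts:
  assumes "b < num_blocks p n"
  shows "big_block p b \<subseteq> run_starts k n"
proof -
  have "Suc b * period p \<le> num_blocks p n * period p"
    using assms by (intro mult_le_mono1) simp
  also have "\<dots> \<le> num_starts n"
    by (simp add: num_blocks_def div_times_less_eq_dividend)
  finally show ?thesis
    using le_period[of p] by (auto simp: big_block_def run_starts_eq_num_starts)
qed

lemma sum_centered_decomp: "(\<Sum>i\<in>run_starts k n. centered i \<omega>)
    = (\<Sum>b<num_blocks p n. block_sum p b \<omega>) + (\<Sum>i\<in>leftover_starts p n. centered i \<omega>)"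
proof -
  have "(\<Sum>i\<in>run_starts k n. centered i \<omega>)
      = (\<Sum>i\<in>(\<Union>b<num_blocks p n. big_block p b). centered i \<omega>) + (\<Sum>i\<in>leftover_starts p n. centered i \<omega>)"
    unfolding leftover_starts_def using big_block_subset_run_starts
    by (subst sum.subset_diff[of "\<Union>b<num_blocks p n. big_block p b"]) auto
  also have "(\<Sum>i\<in>(\<Union>b<num_blocks p n. big_block p b). centered i \<omega>) = (\<Sum>b<num_blocks p n. block_sum p b \<omega>)"
    unfolding block_sum_def using disjoint_family_big_block
    by (intro sum.UNION_disjoint) (auto simp: disjoint_family_on_def)
  finally show ?thesis .
qed

lemma card_leftover_starts_le: "card (leftover_starts p n) \<le> num_blocks p n * (k - 1) + period p"
proof -
  have "card (\<Union>b<num_blocks p n. big_block p b) = num_blocks p n * p"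
    using disjoint_family_big_block
    by (subst card_UN_disjoint) (auto simp: disjoint_family_on_def)
  then have "card (leftover_starts p n) = num_starts n - num_blocks p n * p"
    unfolding leftover_starts_def using big_block_subset_run_starts
    by (subst card_Diff_subset) (auto intro: finite_subset simp: run_starts_eq_num_starts)
  moreover have "num_starts n < period p * Suc (num_blocks p n)"
    unfolding num_blocks_def using period_pos by (simp add: dividend_less_times_div)
  ultimately show ?thesis
    using one_le_k by (simp add: period_def algebra_simps)
qed

lemma expectation_leftover_sum_sq_le: "iid.expectation (\<lambda>\<omega>. (\<Sum>i\<in>leftover_starts p n. centered i \<omega>)\<^sup>2)
    \<le> real (2 * k - 1) * (real (num_blocks p n) * real (k - 1) + real (period p))"
proof -
  have "iid.expectation (\<lambda>\<omega>. (\<Sum>i\<in>leftover_starts p n. centered i \<omega>)\<^sup>2) = cov_sum (leftover_starts p n)"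
    by (rule expectation_sum_centered_sq) (auto simp: leftover_starts_def run_starts_eq_num_starts)
  also have "\<dots> \<le> real (2 * k - 1) * card (leftover_starts p n)"
    by (rule cov_sum_le) (simp add: leftover_starts_def)
  also have "\<dots> \<le> real (2 * k - 1) * (real (num_blocks p n) * real (k - 1) + real (period p))"
    using card_leftover_starts_le[of p n] by (intro mult_left_mono) (simp_all flip: of_nat_mult of_nat_add)
  finally show ?thesis .
qed

end

section \<open>Asymptotics of the variance\<close>

context ascending_runs
begin

lemma filterlim_num_starts: "filterlim num_starts at_top sequentially"
proof -
  have "num_starts = (\<lambda>n. Suc n - k)"
    by (simp add: fun_eq_iff num_starts_def)
  then show ?thesis
    using filterlim_compose[OF filterlim_minus_const_nat_at_top[of k] filterlim_Suc] by simp
qed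

lemma filterlim_real_num_starts: "filterlim (\<lambda>n. real (num_starts n)) at_top sequentially"
  by (rule filterlim_compose[OF filterlim_real_sequentially filterlim_num_starts])

lemma tendsto_const_over_num_starts: "(\<lambda>n. c / real (num_starts n)) \<longlonglongrightarrow> 0"
  by (rule tendsto_divide_0[OF tendsto_const filterlim_at_top_imp_at_infinity[OF filterlim_real_num_starts]])

lemma eventually_num_starts_ge: "\<forall>\<^sub>F n in sequentially. m \<le> num_starts n"
  using filterlim_num_starts by (simp add: filterlim_at_top)

lemma filterlim_num_blocks: "filterlim (num_blocks p) at_top sequentially"
  unfolding num_blocks_def[abs_def]
  using filterlim_compose[OF filterlim_at_top_div_const_nat[OF period_pos] filterlim_num_starts] .

lemma tendsto_count_var_over_num_starts: "(\<lambda>n. count_var n / num_starts n) \<longlonglongrightarrow> sigma2"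
proof -
  have "(\<lambda>n. sigma2 + var_offset / num_starts n) \<longlonglongrightarrow> sigma2"
    using tendsto_add[OF tendsto_const tendsto_const_over_num_starts] by simp
  moreover have "\<forall>\<^sub>F n in sequentially. sigma2 + var_offset / num_starts n = count_var n / num_starts n"
    using eventually_num_starts_ge[of k]
    by eventually_elim (use one_le_k in \<open>simp add: count_var_def block_var_affine field_simps\<close>)
  ultimately show ?thesis by (rule Lim_transform_eventually)
qed

lemma tendsto_num_blocks_over_num_starts: "(\<lambda>n. num_blocks p n / num_starts n) \<longlonglongrightarrow> 1 / period p"
proof -
  have "0 < period p" by (rule period_pos)
  have "(\<lambda>n. (num_starts n mod period p) / real (num_starts n)) \<longlonglongrightarrow> 0"
  proof (rule Lim_null_comparison)
    show "\<forall>\<^sub>F n in sequentially.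
        norm ((num_starts n mod period p) / real (num_starts n)) \<le> period p / real (num_starts n)"
      using \<open>0 < period p\<close> by (intro always_eventually allI) (simp add: divide_right_mono)
  qed (rule tendsto_const_over_num_starts)
  then have "(\<lambda>n. (1 - (num_starts n mod period p) / real (num_starts n)) / period p) \<longlonglongrightarrow> (1 - 0) / period p"
    by (intro tendsto_intros) (use \<open>0 < period p\<close> in simp_all)
  moreover have "\<forall>\<^sub>F n in sequentially.
      (1 - (num_starts n mod period p) / real (num_starts n)) / period p = num_blocks p n / num_starts n"
    using eventually_num_starts_ge[of 1]
  proof eventually_elim
    case (elim n)
    have "real (num_blocks p n) * period p + num_starts n mod period p = num_starts n"
      unfolding num_blocks_def by (metis div_mult_mod_eq of_nat_add of_nat_mult)
    then have N: "real (num_blocks p n) = (real (num_starts n) - real (num_starts n mod period p)) / period p"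
      using \<open>0 < period p\<close> by (simp add: field_simps)
    show ?case unfolding N using elim \<open>0 < period p\<close> by (simp add: field_simps)
  qed
  ultimately have "(\<lambda>n. num_blocks p n / num_starts n) \<longlonglongrightarrow> (1 - 0) / period p"
    by (rule Lim_transform_eventually)
  then show ?thesis by simp
qed

lemma eventually_count_var_pos: "\<forall>\<^sub>F n in sequentially. 0 < count_var n"
  using order_tendstoD(1)[OF tendsto_count_var_over_num_starts sigma2_pos] eventually_num_starts_ge[of 1]
  by eventually_elim (simp add: zero_less_divide_iff)

lemma eventually_block_var_pos: "\<forall>\<^sub>F p in sequentially. 0 < block_var p"
proof -
  have "(\<lambda>p. sigma2 + var_offset / real p) \<longlonglongrightarrow> sigma2 + 0"
    by (intro tendsto_add tendsto_const lim_const_over_n)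
  then have "\<forall>\<^sub>F p in sequentially. 0 < sigma2 + var_offset / real p"
    using sigma2_pos by (intro order_tendstoD(1)) simp_all
  with eventually_ge_at_top[of k] show ?thesis
  proof eventually_elim
    case (elim p)
    then have "0 < real p" using one_le_k by simp
    with elim show ?case by (simp add: block_var_affine field_simps)
  qed
qed

lemma tendsto_count_var_over_blocks:
  assumes "0 < block_var p"
  shows "(\<lambda>n. count_var n / (num_blocks p n * block_var p)) \<longlonglongrightarrow> period p * sigma2 / block_var p"
proof -
  have "(\<lambda>n. (count_var n / num_starts n) / ((num_blocks p n / num_starts n) * block_var p))
      \<longlonglongrightarrow> sigma2 / ((1 / period p) * block_var p)"
    using assms period_pos[of p]
    by (intro tendsto_intros tendsto_count_var_over_num_starts tendsto_num_blocks_over_num_starts) auto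
  moreover have "\<forall>\<^sub>F n in sequentially.
      (count_var n / num_starts n) / ((num_blocks p n / num_starts n) * block_var p)
      = count_var n / (num_blocks p n * block_var p)"
    using eventually_num_starts_ge[of 1] by eventually_elim (simp add: divide_simps)
  ultimately have "(\<lambda>n. count_var n / (num_blocks p n * block_var p)) \<longlonglongrightarrow> sigma2 / ((1 / period p) * block_var p)"
    by (rule Lim_transform_eventually)
  then show ?thesis by (simp add: mult.commute)
qed

lemma tendsto_num_blocks_over_count_var: "(\<lambda>n. num_blocks p n / count_var n) \<longlonglongrightarrow> 1 / (period p * sigma2)"
proof -
  have "(\<lambda>n. (num_blocks p n / num_starts n) / (count_var n / num_starts n)) \<longlonglongrightarrow> (1 / period p) / sigma2"
    using sigma2_pos
    by (intro tendsto_divide tendsto_count_var_over_num_starts tendsto_num_blocks_over_num_starts) auto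
  moreover have "\<forall>\<^sub>F n in sequentially. (num_blocks p n / num_starts n) / (count_var n / num_starts n)
      = num_blocks p n / count_var n"
    using eventually_num_starts_ge[of 1] by eventually_elim (simp add: divide_simps)
  ultimately have "(\<lambda>n. num_blocks p n / count_var n) \<longlonglongrightarrow> (1 / period p) / sigma2"
    by (rule Lim_transform_eventually)
  then show ?thesis by simp
qed

lemma tendsto_const_over_count_var: "(\<lambda>n. c / count_var n) \<longlonglongrightarrow> 0"
proof -
  have "(\<lambda>n. (c / num_starts n) / (count_var n / num_starts n)) \<longlonglongrightarrow> 0 / sigma2"
    using sigma2_pos
    by (intro tendsto_divide tendsto_count_var_over_num_starts tendsto_const_over_num_starts) auto
  moreover have "\<forall>\<^sub>F n in sequentially. (c / num_starts n) / (count_var n / num_starts n) = c / count_var n"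
    using eventually_num_starts_ge[of 1] by eventually_elim (simp add: divide_simps)
  ultimately have "(\<lambda>n. c / count_var n) \<longlonglongrightarrow> 0 / sigma2"
    by (rule Lim_transform_eventually)
  then show ?thesis by simp
qed

end

section \<open>The central limit theorem\<close>

context ascending_runs
begin

definition normalized_count :: "nat \<Rightarrow> (nat \<Rightarrow> real) \<Rightarrow> real" where
  "normalized_count n \<omega> = (run_count k n \<omega> - num_starts n * mu) / sqrt (count_var n)"

definition blocks_part :: "nat \<Rightarrow> nat \<Rightarrow> (nat \<Rightarrow> real) \<Rightarrow> real" where
  "blocks_part p n \<omega> = (\<Sum>b<num_blocks p n. block_sum p b \<omega>) / sqrt (count_var n)"

definition rest_part :: "nat \<Rightarrow> nat \<Rightarrow> (nat \<Rightarrow> real) \<Rightarrow> real" where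
  "rest_part p n \<omega> = (\<Sum>i\<in>leftover_starts p n. centered i \<omega>) / sqrt (count_var n)"

definition block_scale :: "nat \<Rightarrow> real" where
  "block_scale p = sqrt (period p * sigma2 / block_var p)"

definition rest_bound :: "nat \<Rightarrow> real" where
  "rest_bound p = (2 * k - 1) * (k - 1) / (p * sigma2) + 1 / p"

lemma normalized_count_decomp: "normalized_count n \<omega> = blocks_part p n \<omega> + rest_part p n \<omega>"
  unfolding normalized_count_def blocks_part_def rest_part_def run_count_minus_mean sum_centered_decomp[where p=p]
  by (simp add: add_divide_distrib)

lemma measurable_normalized_count[measurable]: "normalized_count n \<in> borel_measurable iid_unif"
  unfolding normalized_count_def[abs_def] by measurable

lemma measurable_blocks_part[measurable]: "blocks_part p n \<in> borel_measurable iid_unif"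
  unfolding blocks_part_def[abs_def] by measurable

lemma measurable_rest_part[measurable]: "rest_part p n \<in> borel_measurable iid_unif"
  unfolding rest_part_def[abs_def] by measurable

lemma integrable_rest_part_sq: "integrable iid_unif (\<lambda>\<omega>. (rest_part p n \<omega>)\<^sup>2)"
proof -
  have bound: "\<bar>\<Sum>i\<in>leftover_starts p n. centered i \<omega>\<bar> \<le> card (leftover_starts p n)" for \<omega>
  proof -
    have "\<bar>\<Sum>i\<in>leftover_starts p n. centered i \<omega>\<bar> \<le> (\<Sum>i\<in>leftover_starts p n. \<bar>centered i \<omega>\<bar>)"
      by (rule sum_abs)
    also have "\<dots> \<le> (\<Sum>i\<in>leftover_starts p n. 1)"
      by (intro sum_mono abs_centered_le_1)
    finally show ?thesis by simp
  qed
  have "integrable iid_unif (\<lambda>\<omega>. (\<Sum>i\<in>leftover_starts p n. centered i \<omega>)\<^sup>2)"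
    using power_mono[OF bound abs_ge_zero, of _ 2]
    by (intro iid.integrable_const_bound[of _ "real (card (leftover_starts p n)) ^ 2"]) auto
  then show ?thesis
    unfolding rest_part_def power_divide by simp
qed

lemma tendsto_prob_block_sums_le:
  assumes "0 < block_var p"
  shows "(\<lambda>N. iid.prob {\<omega>. (\<Sum>b<N. block_sum p b \<omega>) / sqrt (N * block_var p) \<le> z})
    \<longlonglongrightarrow> cdf std_normal_distribution z"
proof -
  have "(\<lambda>N. cdf (distr iid_unif borel (\<lambda>\<omega>. (\<Sum>b<N. block_sum p b \<omega>) / sqrt (N * block_var p))) z)
      \<longlonglongrightarrow> cdf std_normal_distribution z"
    using clt_block_sum[OF assms] isCont_std_normal_cdf unfolding weak_conv_m_def weak_conv_def by blast
  then show ?thesis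
    by (simp add: cdf_def measure_distr vimage_def)
qed

lemma tendsto_prob_blocks_part_le:
  assumes "0 < block_var p"
  shows "(\<lambda>n. iid.prob {\<omega>. blocks_part p n \<omega> \<le> y}) \<longlonglongrightarrow> cdf std_normal_distribution (y * block_scale p)"
proof -
  define F where "F N z = iid.prob {\<omega>. (\<Sum>b<N. block_sum p b \<omega>) / sqrt (N * block_var p) \<le> z}" for N z
  define r where "r n = sqrt (count_var n / (num_blocks p n * block_var p))" for n
  have "(\<lambda>N. F N z) \<longlonglongrightarrow> cdf std_normal_distribution z" for z
    unfolding F_def using assms by (rule tendsto_prob_block_sums_le)
  moreover have "F N a \<le> F N b" if "a \<le> b" for N a b
  proof -
    have "{\<omega>\<in>space iid_unif. (\<Sum>b<N. block_sum p b \<omega>) / sqrt (N * block_var p) \<le> b} \<in> sets iid_unif"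
      by measurable
    then show ?thesis
      unfolding F_def using that by (intro iid.finite_measure_mono) auto
  qed
  moreover have "(\<lambda>n. y * r n) \<longlonglongrightarrow> y * block_scale p"
    unfolding r_def block_scale_def
    by (intro tendsto_intros tendsto_count_var_over_blocks assms)
  ultimately have "(\<lambda>n. F (num_blocks p n) (y * r n)) \<longlonglongrightarrow> cdf std_normal_distribution (y * block_scale p)"
    using tendsto_mono_fun_compose[OF _ _ isCont_std_normal_cdf filterlim_num_blocks] by blast
  moreover have "\<forall>\<^sub>F n in sequentially. F (num_blocks p n) (y * r n) = iid.prob {\<omega>. blocks_part p n \<omega> \<le> y}"
    using eventually_count_var_pos filterlim_num_blocks[of p, unfolded filterlim_at_top, rule_format, of 1]
  proof eventually_elim
    case (elim n)
    then have pos: "0 < sqrt (count_var n)" "0 < sqrt (num_blocks p n * block_var p)"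
      using assms by auto
    have "s / sqrt (count_var n) \<le> y \<longleftrightarrow> s / sqrt (num_blocks p n * block_var p) \<le> y * r n" for s
    proof -
      have eq: "y * r n * sqrt (num_blocks p n * block_var p) = y * sqrt (count_var n)"
        using pos(2) elim(2) assms by (simp add: r_def real_sqrt_divide)
      have "s / sqrt (count_var n) \<le> y \<longleftrightarrow> s \<le> y * sqrt (count_var n)"
        using pos(1) by (rule pos_divide_le_eq)
      also have "\<dots> \<longleftrightarrow> s / sqrt (num_blocks p n * block_var p) \<le> y * r n"
        unfolding eq[symmetric] using pos(2) by (rule pos_divide_le_eq[symmetric])
      finally show ?thesis .
    qed
    then show ?case by (simp add: F_def blocks_part_def)
  qed
  ultimately show ?thesis by (rule Lim_transform_eventually)
qed

lemma tendsto_block_scale: "block_scale \<longlonglongrightarrow> 1"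
proof -
  have "(\<lambda>p. (sigma2 + (k - 1) * sigma2 / p) / (sigma2 + var_offset / p)) \<longlonglongrightarrow> (sigma2 + 0) / (sigma2 + 0)"
    using sigma2_pos by (intro tendsto_intros lim_const_over_n) auto
  moreover have "\<forall>\<^sub>F p in sequentially.
      (sigma2 + (k - 1) * sigma2 / p) / (sigma2 + var_offset / p) = period p * sigma2 / block_var p"
    using eventually_ge_at_top[of k]
  proof eventually_elim
    case (elim p)
    then have "0 < real p" using one_le_k by simp
    moreover have "sigma2 + (k - 1) * sigma2 / p = period p * sigma2 / p"
      using \<open>0 < real p\<close> one_le_k by (simp add: period_def of_nat_diff field_simps)
    moreover have "sigma2 + var_offset / p = block_var p / p"
      using \<open>0 < real p\<close> elim by (simp add: block_var_affine field_simps)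
    ultimately show ?case by simp
  qed
  ultimately have "(\<lambda>p. period p * sigma2 / block_var p) \<longlonglongrightarrow> (sigma2 + 0) / (sigma2 + 0)"
    by (rule Lim_transform_eventually)
  then have "(\<lambda>p. period p * sigma2 / block_var p) \<longlonglongrightarrow> 1"
    using sigma2_pos by simp
  then show ?thesis
    unfolding block_scale_def using tendsto_real_sqrt[of _ 1] by simp
qed

lemma tendsto_rest_bound: "rest_bound \<longlonglongrightarrow> 0"
proof -
  have "(\<lambda>p. (2 * k - 1) * (k - 1) / sigma2 / p + 1 / p) \<longlonglongrightarrow> 0 + 0"
    by (intro tendsto_add lim_const_over_n)
  then show ?thesis
    by (simp add: rest_bound_def[abs_def] divide_divide_eq_left mult.commute)
qed

lemma eventually_expectation_rest_part_sq_le: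
  assumes "1 \<le> p"
  shows "\<forall>\<^sub>F n in sequentially. iid.expectation (\<lambda>\<omega>. (rest_part p n \<omega>)\<^sup>2) \<le> rest_bound p"
proof -
  define c :: real where "c = (2 * k - 1) * (k - 1)"
  have "(\<lambda>n. c * (num_blocks p n / count_var n) + (2 * k - 1) * period p / count_var n)
      \<longlonglongrightarrow> c * (1 / (period p * sigma2)) + 0"
    by (intro tendsto_intros tendsto_num_blocks_over_count_var tendsto_const_over_count_var)
  moreover have "c * (1 / (period p * sigma2)) + 0 < rest_bound p"
  proof -
    have "c * (1 / (period p * sigma2)) \<le> c / (p * sigma2)"
      using assms le_period[of p] sigma2_pos
      by (auto simp: c_def intro!: divide_left_mono mult_right_mono)
    moreover have "0 < 1 / real p"
      using assms by simp
    ultimately show ?thesis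
      unfolding rest_bound_def c_def by linarith
  qed
  ultimately have "\<forall>\<^sub>F n in sequentially.
      c * (num_blocks p n / count_var n) + (2 * k - 1) * period p / count_var n < rest_bound p"
    by (rule order_tendstoD(2))
  with eventually_count_var_pos show ?thesis
  proof eventually_elim
    case (elim n)
    have "iid.expectation (\<lambda>\<omega>. (rest_part p n \<omega>)\<^sup>2)
        = iid.expectation (\<lambda>\<omega>. (\<Sum>i\<in>leftover_starts p n. centered i \<omega>)\<^sup>2) / count_var n"
      using elim(1) by (simp add: rest_part_def power_divide)
    also have "\<dots> \<le> (2 * k - 1) * (num_blocks p n * (k - 1) + period p) / count_var n"
      using elim(1) expectation_leftover_sum_sq_le by (intro divide_right_mono) auto
    also have "\<dots> = c * (num_blocks p n / count_var n) + (2 * k - 1) * period p / count_var n"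
      by (simp add: c_def field_simps add_divide_distrib)
    finally show ?case using elim(2) by linarith
  qed
qed

lemma tendsto_prob_normalized_count_le:
  "(\<lambda>n. iid.prob {\<omega>. normalized_count n \<omega> \<le> x}) \<longlonglongrightarrow> cdf std_normal_distribution x"
proof -
  have "(\<lambda>n. iid.prob {\<omega>\<in>space iid_unif. normalized_count n \<omega> \<le> x}) \<longlonglongrightarrow> cdf std_normal_distribution x"
  proof (rule iid.tendsto_prob_le_of_approx[OF normalized_count_decomp])
    show "\<forall>\<^sub>F p in sequentially. \<forall>y. (\<lambda>n. iid.prob {\<omega>\<in>space iid_unif. blocks_part p n \<omega> \<le> y})
        \<longlonglongrightarrow> cdf std_normal_distribution (y * block_scale p)"
      using eventually_block_var_pos by eventually_elim (simp add: tendsto_prob_blocks_part_le)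
    show "(\<lambda>p. cdf std_normal_distribution (y * block_scale p)) \<longlonglongrightarrow> cdf std_normal_distribution y" for y
      using isCont_tendsto_compose[OF isCont_std_normal_cdf tendsto_mult[OF tendsto_const tendsto_block_scale]]
      by simp
    show "\<forall>\<^sub>F p in sequentially. \<forall>\<^sub>F n in sequentially. iid.expectation (\<lambda>\<omega>. (rest_part p n \<omega>)\<^sup>2) \<le> rest_bound p"
      using eventually_ge_at_top[of 1] by eventually_elim (rule eventually_expectation_rest_part_sq_le)
    show "blocks_part p n \<in> borel_measurable iid_unif" for p n
      by (rule measurable_blocks_part)
    show "rest_part p n \<in> borel_measurable iid_unif" for p n
      by (rule measurable_rest_part)
    show "integrable iid_unif (\<lambda>\<omega>. (rest_part p n \<omega>)\<^sup>2)" for p n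
      by (rule integrable_rest_part_sq)
  qed (rule isCont_std_normal_cdf, rule tendsto_rest_bound)
  then show ?thesis by simp
qed

end

lemma integral_Y_eq_integral_run_count:
  fixes f :: "real \<Rightarrow> real"
  assumes "f \<in> borel_measurable borel"
  shows "measure_pmf.expectation (unif_perm n) (\<lambda>p. f (Y k n p)) = iid.expectation (\<lambda>\<omega>. f (run_count k n \<omega>))"
proof -
  have "measure_pmf.expectation (unif_perm n) (\<lambda>p. f (Y k n p))
      = integral\<^sup>L (distr (measure_pmf (unif_perm n)) borel (Y k n)) f"
    using assms by (simp add: integral_distr)
  also have "\<dots> = integral\<^sup>L (distr iid_unif borel (run_count k n)) f"
    by (simp add: distr_run_count_eq_distr_Y)
  also have "\<dots> = iid.expectation (\<lambda>\<omega>. f (run_count k n \<omega>))"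
    using assms by (simp add: integral_distr)
  finally show ?thesis .
qed

lemma distr_affine_Y:
  "distr (measure_pmf (unif_perm n)) borel (\<lambda>p. (Y k n p - a) / b)
    = distr iid_unif borel (\<lambda>\<omega>. (run_count k n \<omega> - a) / b)"
proof -
  have g: "(\<lambda>x. (x - a) / b) \<in> borel_measurable borel" by simp
  have "distr (measure_pmf (unif_perm n)) borel (\<lambda>p. (Y k n p - a) / b)
      = distr (distr (measure_pmf (unif_perm n)) borel (Y k n)) borel (\<lambda>x. (x - a) / b)"
    by (subst distr_distr[OF g]) (simp_all add: comp_def)
  also have "\<dots> = distr (distr iid_unif borel (run_count k n)) borel (\<lambda>x. (x - a) / b)"
    by (simp add: distr_run_count_eq_distr_Y)
  also have "\<dots> = distr iid_unif borel (\<lambda>\<omega>. (run_count k n \<omega> - a) / b)"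
    by (subst distr_distr[OF g]) (simp_all add: comp_def)
  finally show ?thesis .
qed

context ascending_runs
begin

lemma expectation_Y: "measure_pmf.expectation (unif_perm n) (Y k n) = num_starts n * mu"
  using integral_Y_eq_integral_run_count[of "\<lambda>x. x" n k] by (simp add: expectation_run_count)

lemma variance_Y: "measure_pmf.variance (unif_perm n) (Y k n) = count_var n"
  using integral_Y_eq_integral_run_count[of "\<lambda>x. (x - num_starts n * mu)\<^sup>2" n k]
  by (simp add: expectation_Y expectation_run_count_dev_sq)

theorem weak_conv_normalized_Y:
  "weak_conv_m
     (\<lambda>n. distr (measure_pmf (unif_perm n)) borel
        (\<lambda>p. (Y k n p - measure_pmf.expectation (unif_perm n) (Y k n))
              / sqrt (measure_pmf.variance (unif_perm n) (Y k n))))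
     std_normal_distribution"
  unfolding weak_conv_m_def weak_conv_def
proof (intro allI impI)
  fix x
  have "distr (measure_pmf (unif_perm n)) borel
      (\<lambda>p. (Y k n p - measure_pmf.expectation (unif_perm n) (Y k n))
            / sqrt (measure_pmf.variance (unif_perm n) (Y k n)))
    = distr iid_unif borel (normalized_count n)" for n
    unfolding variance_Y unfolding expectation_Y distr_affine_Y normalized_count_def[abs_def] ..
  moreover have "cdf (distr iid_unif borel (normalized_count n)) x = iid.prob {\<omega>. normalized_count n \<omega> \<le> x}" for n
    by (simp add: cdf_def measure_distr vimage_def)
  ultimately show "(\<lambda>n. cdf (distr (measure_pmf (unif_perm n)) borel
        (\<lambda>p. (Y k n p - measure_pmf.expectation (unif_perm n) (Y k n))
              / sqrt (measure_pmf.variance (unif_perm n) (Y k n)))) x) \<longlonglongrightarrow> cdf std_normal_distribution x"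
    using tendsto_prob_normalized_count_le[of x] by simp
qed

end

theorem mainTheorem4:
  fixes k :: nat
  assumes "k \<ge> 2"
  shows "weak_conv_m
     (\<lambda>n. distr (measure_pmf (unif_perm n)) borel
        (\<lambda>p. (Y k n p - measure_pmf.expectation (unif_perm n) (Y k n))
              / sqrt (measure_pmf.variance (unif_perm n) (Y k n))))
     std_normal_distribution"
proof -
  interpret ascending_runs k
    using assms by unfold_locales
  show ?thesis
    by (rule weak_conv_normalized_Y)
qed

end
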